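(* For each integer $t\ge0$ and each even integer $n\ge4$, there exists a binary even-like Euclidean self-orthogonal $[2^{t+1}n,\,n+t,\,2^{t+2}]_2$ code.
   Context: A binary code is even-like if every codeword has even Hamming weight. A code $\mathcal{C}$ is Euclidean self-orthogonal if $\mathcal{C}\subseteq\mathcal{C}^{\perp_E}$, where $\perp_E$ is the dual under $\sum_ix_iy_i$. *)

theory Defs
  imports Main "HOL-Library.Z2"
begin

definition words :: "nat \<Rightarrow> bit list set" where
  "words N = {x. length x = N}"

definition zero_word :: "nat \<Rightarrow> bit list" where
  "zero_word N = replicate N 0"

definition word_add :: "bit list \<Rightarrow> bit list \<Rightarrow> bit list" where
  "word_add x y = map2 (+) x y"

definition word_smult :: "bit \<Rightarrow> bit list \<Rightarrow> bit list" where
  "word_smult a x = map ((*) a) x"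

definition lincomb :: "nat \<Rightarrow> (nat \<Rightarrow> bit) \<Rightarrow> bit list list \<Rightarrow> bit list" where
  "lincomb N c vs = foldr word_add (map (\<lambda>i. word_smult (c i) (vs ! i)) [0..<length vs]) (zero_word N)"

definition lin_indep :: "nat \<Rightarrow> bit list list \<Rightarrow> bool" where
  "lin_indep N vs \<longleftrightarrow> (\<forall>c. lincomb N c vs = zero_word N \<longrightarrow> (\<forall>i<length vs. c i = 0))"

definition binary_linear_code :: "nat \<Rightarrow> nat \<Rightarrow> bit list set \<Rightarrow> bool" where
  "binary_linear_code N k C \<longleftrightarrow>
     (\<exists>vs. length vs = k \<and> set vs \<subseteq> words N \<and> lin_indep N vs \<and>
           C = {lincomb N c vs | c. True})"

definition hamming_weight :: "bit list \<Rightarrow> nat" where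
  "hamming_weight x = card {i. i < length x \<and> x ! i \<noteq> 0}"

definition hamming_dist :: "bit list \<Rightarrow> bit list \<Rightarrow> nat" where
  "hamming_dist x y = card {i. i < length x \<and> x ! i \<noteq> y ! i}"

definition min_distance :: "bit list set \<Rightarrow> nat" where
  "min_distance C = Min {hamming_dist x y | x y. x \<in> C \<and> y \<in> C \<and> x \<noteq> y}"

definition even_like :: "bit list set \<Rightarrow> bool" where
  "even_like C \<longleftrightarrow> (\<forall>x\<in>C. even (hamming_weight x))"

definition euclid_inner :: "bit list \<Rightarrow> bit list \<Rightarrow> bit" where
  "euclid_inner x y = (\<Sum>i<length x. x ! i * y ! i)"

definition euclid_dual :: "nat \<Rightarrow> bit list set \<Rightarrow> bit list set" where
  "euclid_dual N C = {y \<in> words N. \<forall>x\<in>C. euclid_inner x y = 0}"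

definition euclid_self_orthogonal :: "nat \<Rightarrow> bit list set \<Rightarrow> bool" where
  "euclid_self_orthogonal N C \<longleftrightarrow> C \<subseteq> euclid_dual N C"

end

theory Submission
  imports Defs
begin

(* The code consists of the words a \<otimes> 1 + 1 \<otimes> u: coordinates are pairs (j, x) with j < n and
   x \<in> GF(2)^(t+1), a ranges over the even-weight code of length n and u over the linear forms
   on GF(2)^(t+1), which gives dimension (n - 1) + (t + 1).
   A nonzero u takes the value 1 on exactly half of GF(2)^(t+1) (flipping a bit on which u depends
   is an involution exchanging its two level sets), so such codewords have weight n 2^t \<ge> 2^(t+2)
   as n \<ge> 4; for u = 0 the weight is 2^(t+1) wt(a) \<ge> 2^(t+2), with equality for wt(a) = 2.
   Summing blockwise, the inner product of two codewords is
   2^(t+1) a\<cdot>b + wt(a) \<Sigma>v + wt(b) \<Sigma>u + n u\<cdot>v, which vanishes mod 2 since 2^(t+1) and n are even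
   and a, b have even weight. A self-orthogonal binary code is even-like because x\<cdot>x is the
   weight of x mod 2. *)

(* Z2 rewrites + and * on bit to XOR and AND; here we want plain field arithmetic. *)
declare add_bit_eq_xor [simp del] mult_bit_eq_and [simp del]

lemma of_nat_bit_eq_0_iff: "(of_nat k :: bit) = 0 \<longleftrightarrow> even k"
  by (induction k) auto

lemma bit_add_eq_0_iff: "(a :: bit) + b = 0 \<longleftrightarrow> a = b"
  by (cases a; cases b) auto

lemma bit_mult_self: "(a :: bit) * a = of_bool (a \<noteq> 0)"
  by (cases a) auto

lemma foldr_word_add_eq_map_sum:
  assumes "\<forall>k\<in>set xs. length (h k) = N"
  shows "foldr word_add (map h xs) (zero_word N) = map (\<lambda>p. \<Sum>k\<leftarrow>xs. h k ! p) [0..<N]"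
  using assms
  by (induction xs) (auto simp: zero_word_def map_replicate_const word_add_def intro!: nth_equalityI)

lemma lincomb_eq_map_sum:
  assumes "set vs \<subseteq> words N"
  shows "lincomb N c vs = map (\<lambda>p. \<Sum>k<length vs. c k * vs ! k ! p) [0..<N]"
proof -
  have len: "length (vs ! k) = N" if "k < length vs" for k
    using assms nth_mem[OF that] by (auto simp: words_def)
  have "lincomb N c vs = map (\<lambda>p. \<Sum>k\<leftarrow>[0..<length vs]. word_smult (c k) (vs ! k) ! p) [0..<N]"
    unfolding lincomb_def map_map[symmetric]
    by (rule foldr_word_add_eq_map_sum) (simp add: word_smult_def len)
  also have "\<dots> = map (\<lambda>p. \<Sum>k<length vs. c k * vs ! k ! p) [0..<N]"
    by (auto simp: word_smult_def len interv_sum_list_conv_sum_set_nat atLeast0LessThan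
      intro!: sum.cong)
  finally show ?thesis .
qed

lemma hamming_dist_map:
  "hamming_dist (map f [0..<N]) (map g [0..<N]) = card {p. p < N \<and> f p + g p \<noteq> (0 :: bit)}"
  unfolding hamming_dist_def by (auto simp: bit_add_eq_0_iff intro!: arg_cong[where f = card])

lemma euclid_inner_self: "euclid_inner x x = of_nat (hamming_weight x)"
proof -
  have "euclid_inner x x = (\<Sum>i<length x. of_bool (x ! i \<noteq> 0))"
    by (simp add: euclid_inner_def bit_mult_self)
  also have "\<dots> = of_nat (hamming_weight x)"
    by (simp add: hamming_weight_def Int_def)
  finally show ?thesis .
qed

lemma self_orthogonal_imp_even_like:
  assumes "euclid_self_orthogonal N C"
  shows "even_like C"
  unfolding even_like_def
proof
  fix x assume "x \<in> C"
  with assms have "euclid_inner x x = 0"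
    by (auto simp: euclid_self_orthogonal_def euclid_dual_def)
  then show "even (hamming_weight x)"
    by (simp add: euclid_inner_self of_nat_bit_eq_0_iff)
qed

lemma min_distance_eqI:
  assumes "C \<subseteq> words N"
    and "\<And>x y. x \<in> C \<Longrightarrow> y \<in> C \<Longrightarrow> x \<noteq> y \<Longrightarrow> d \<le> hamming_dist x y"
    and "x \<in> C" "y \<in> C" "x \<noteq> y" "hamming_dist x y = d"
  shows "min_distance C = d"
proof -
  define D where "D = {hamming_dist x y | x y. x \<in> C \<and> y \<in> C \<and> x \<noteq> y}"
  have "hamming_dist x y \<le> N" if "x \<in> words N" for x y
    using that card_mono[of "{..<N}" "{i. i < length x \<and> x ! i \<noteq> y ! i}"]
    by (auto simp: hamming_dist_def words_def)
  then have "D \<subseteq> {..N}"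
    using assms(1) by (auto simp: D_def)
  then have "finite D"
    by (rule finite_subset) simp
  moreover have "d \<in> D"
    using assms(3-6) unfolding D_def by blast
  ultimately have "Min D = d"
    using assms(2) by (intro Min_eqI) (auto simp: D_def)
  then show ?thesis
    by (simp add: min_distance_def D_def)
qed

lemma card_half_if_involution_flips:
  fixes f :: "'a \<Rightarrow> bit"
  assumes "finite A"
    and "\<And>x. x \<in> A \<Longrightarrow> \<phi> x \<in> A" "\<And>x. x \<in> A \<Longrightarrow> \<phi> (\<phi> x) = x"
    and "\<And>x. x \<in> A \<Longrightarrow> f (\<phi> x) = f x + 1"
  shows "2 * card {x \<in> A. f x \<noteq> 0} = card A"
proof -
  let ?S = "{x \<in> A. f x \<noteq> 0}" and ?Z = "{x \<in> A. f x = 0}"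
  have "bij_betw \<phi> ?S ?Z"
    by (rule bij_betw_byWitness[where f' = \<phi>]) (use assms(2-4) in \<open>auto simp: bit_add_eq_0_iff\<close>)
  then have "card ?S = card ?Z"
    by (rule bij_betw_same_card)
  moreover have "card A = card (?S \<union> ?Z)"
    by (rule arg_cong[where f = card]) auto
  moreover have "card (?S \<union> ?Z) = card ?S + card ?Z"
    by (rule card_Un_disjoint) (use assms(1) in auto)
  ultimately show ?thesis
    by simp
qed

lemma sum_lessThan_mult_eq_sum_blocks:
  fixes n m :: nat
  shows "(\<Sum>p<n * m. g p) = (\<Sum>j<n. \<Sum>x<m. g (j * m + x))"
proof -
  have "(\<Sum>p<n * m. g p) = (\<Sum>j<n. \<Sum>p\<in>{j * m..<j * m + m}. g p)"
    by (rule sum.nat_group[symmetric])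
  also have "\<dots> = (\<Sum>j<n. \<Sum>x<m. g (j * m + x))"
    using sum.atLeastLessThan_shift_bounds[of g 0 "_ * m" m]
    by (simp add: atLeast0LessThan add.commute comp_def)
  finally show ?thesis .
qed

lemma card_lessThan_mult_eq_sum_blocks:
  fixes n m :: nat
  shows "card {p. p < n * m \<and> P p} = (\<Sum>j<n. card {x. x < m \<and> P (j * m + x)})"
proof -
  have card_eq_sum: "card {p. p < k \<and> Q p} = (\<Sum>p<k. of_bool (Q p))" for k :: nat and Q
    by (simp add: Int_def conj_commute)
  show ?thesis
    unfolding card_eq_sum by (rule sum_lessThan_mult_eq_sum_blocks)
qed

definition kronecker_sum :: "nat \<Rightarrow> (nat \<Rightarrow> 'a::plus) \<Rightarrow> (nat \<Rightarrow> 'a) \<Rightarrow> nat \<Rightarrow> 'a" where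
  "kronecker_sum m a u p = a (p div m) + u (p mod m)"

lemma kronecker_sum_block: "x < m \<Longrightarrow> kronecker_sum m a u (j * m + x) = a j + u x"
  by (simp add: kronecker_sum_def)

lemma card_support_kronecker_sum:
  "card {p. p < n * m \<and> kronecker_sum m a u p \<noteq> 0} = (\<Sum>j<n. card {x. x < m \<and> a j + u x \<noteq> 0})"
  unfolding card_lessThan_mult_eq_sum_blocks
  by (intro sum.cong refl arg_cong[where f = card]) (auto simp: kronecker_sum_block)

lemma sum_kronecker_sum_mult:
  fixes a b u v :: "nat \<Rightarrow> 'a::comm_semiring_1"
  shows "(\<Sum>p<n * m. kronecker_sum m a u p * kronecker_sum m b v p) =
    of_nat m * (\<Sum>j<n. a j * b j) + (\<Sum>j<n. a j) * (\<Sum>x<m. v x)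
      + (\<Sum>j<n. b j) * (\<Sum>x<m. u x) + of_nat n * (\<Sum>x<m. u x * v x)"
proof -
  have "(\<Sum>p<n * m. kronecker_sum m a u p * kronecker_sum m b v p) =
      (\<Sum>j<n. \<Sum>x<m. a j * b j + a j * v x + b j * u x + u x * v x)"
    unfolding sum_lessThan_mult_eq_sum_blocks
  proof (intro sum.cong refl)
    fix j x assume "x \<in> {..<m}"
    then have "x < m" by simp
    then show "kronecker_sum m a u (j * m + x) * kronecker_sum m b v (j * m + x) =
        a j * b j + a j * v x + b j * u x + u x * v x"
      unfolding kronecker_sum_block[OF \<open>x < m\<close>] by (simp add: algebra_simps)
  qed
  also have "\<dots> = (\<Sum>j<n. of_nat m * (a j * b j) + a j * (\<Sum>x<m. v x)
      + b j * (\<Sum>x<m. u x) + (\<Sum>x<m. u x * v x))"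
    by (simp add: sum.distrib sum_distrib_left)
  also have "\<dots> = of_nat m * (\<Sum>j<n. a j * b j) + (\<Sum>j<n. a j) * (\<Sum>x<m. v x)
      + (\<Sum>j<n. b j) * (\<Sum>x<m. u x) + of_nat n * (\<Sum>x<m. u x * v x)"
    by (simp only: sum.distrib sum_distrib_left[symmetric] sum_distrib_right[symmetric]
        sum_constant card_lessThan)
  finally show ?thesis .
qed

lemma sum_bit_eq_of_nat_card:
  fixes f :: "'a \<Rightarrow> bit"
  assumes "finite A"
  shows "(\<Sum>x\<in>A. f x) = of_nat (card {x \<in> A. f x \<noteq> 0})"
proof -
  have "(\<Sum>x\<in>A. f x) = (\<Sum>x\<in>A. of_bool (f x \<noteq> 0))"
    by (intro sum.cong refl) (cases "f x"; simp)
  with assms show ?thesis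
    by (simp add: Int_def)
qed

definition linear_form :: "nat \<Rightarrow> (nat \<Rightarrow> bit) \<Rightarrow> nat \<Rightarrow> bit" where
  "linear_form r a x = (\<Sum>i<r. a i * of_bool (bit x i))"

lemma linear_form_0 [simp]: "linear_form r a 0 = 0"
  by (simp add: linear_form_def)

lemma linear_form_eq_0: "(\<And>i. i < r \<Longrightarrow> a i = 0) \<Longrightarrow> linear_form r a x = 0"
  by (simp add: linear_form_def)

lemma linear_form_add: "linear_form r (\<lambda>i. a i + b i) x = linear_form r a x + linear_form r b x"
  by (simp add: linear_form_def sum.distrib distrib_right)

lemma linear_form_exp: "i < r \<Longrightarrow> linear_form r a (2 ^ i) = a i"
  by (simp add: linear_form_def bit_exp_iff if_distrib cong: if_cong)

lemma linear_form_flip_bit: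
  assumes "i < r"
  shows "linear_form r a (flip_bit i x) = linear_form r a x + a i"
proof -
  have "linear_form r a (flip_bit i x) = (\<Sum>k<r. a k * of_bool (bit x k) + (if k = i then a k else 0))"
    unfolding linear_form_def
    by (intro sum.cong refl) (cases "k = i"; cases "bit x k"; simp add: bit_flip_bit_iff)
  with assms show ?thesis
    by (simp add: sum.distrib linear_form_def)
qed

lemma flip_bit_less_exp:
  fixes x :: nat
  assumes "i < r" "x < 2 ^ r"
  shows "flip_bit i x < 2 ^ r"
proof -
  have "take_bit r (flip_bit i x) = flip_bit i x"
    using assms by (simp add: take_bit_flip_bit_eq take_bit_nat_eq_self)
  then show ?thesis
    by (simp add: take_bit_nat_eq_self_iff)
qed

lemma flip_bit_flip_bit_nat: "flip_bit i (flip_bit i x) = (x :: nat)"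
  by (rule bit_eqI) (auto simp: bit_flip_bit_iff)

lemma card_support_add_linear_form:
  assumes "i < r" "a i = 1"
  shows "2 * card {x. x < 2 ^ r \<and> b + linear_form r a x \<noteq> 0} = 2 ^ r"
  using card_half_if_involution_flips[of "{..<2 ^ r}" "flip_bit i" "\<lambda>x. b + linear_form r a x"] assms
  by (simp add: flip_bit_less_exp flip_bit_flip_bit_nat linear_form_flip_bit add.assoc)

definition parity_extend :: "nat \<Rightarrow> (nat \<Rightarrow> bit) \<Rightarrow> nat \<Rightarrow> bit" where
  "parity_extend n c j = (if j < n - 1 then c j else (\<Sum>k<n - 1. c k))"

lemma parity_extend_add:
  "parity_extend n (\<lambda>k. c k + d k) j = parity_extend n c j + parity_extend n d j"
  by (simp add: parity_extend_def sum.distrib)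

lemma sum_parity_extend: "(\<Sum>j<n. parity_extend n c j) = 0"
proof (cases n)
  case (Suc n')
  then have "(\<Sum>j<n. parity_extend n c j) = (\<Sum>j<n'. parity_extend n c j) + parity_extend n c n'"
    by simp
  also have "\<dots> = (\<Sum>j<n'. c j) + (\<Sum>j<n'. c j)"
    using Suc by (simp add: parity_extend_def)
  finally show ?thesis
    by simp
qed simp

lemma card_support_parity_extend_ge:
  assumes "j < n" "parity_extend n c j \<noteq> 0"
  shows "2 \<le> card {j. j < n \<and> parity_extend n c j \<noteq> 0}"
proof -
  have "of_nat (card {j. j < n \<and> parity_extend n c j \<noteq> 0}) = (0 :: bit)"
    using sum_parity_extend[of n c] sum_bit_eq_of_nat_card[of "{..<n}" "parity_extend n c"]
    by simp
  then obtain k where k: "card {j. j < n \<and> parity_extend n c j \<noteq> 0} = 2 * k"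
    by (auto simp: of_nat_bit_eq_0_iff elim!: evenE)
  moreover have "card {j. j < n \<and> parity_extend n c j \<noteq> 0} \<noteq> 0"
    using assms by auto
  ultimately show ?thesis
    by simp
qed

(* Position p stands for the pair (p div 2^(t+1), p mod 2^(t+1)); the coefficients
   c 0, ..., c (n - 2) determine the even-weight word, c (n - 1), ..., c (n + t - 1) the linear form. *)
definition codeword :: "nat \<Rightarrow> nat \<Rightarrow> (nat \<Rightarrow> bit) \<Rightarrow> nat \<Rightarrow> bit" where
  "codeword n t c =
    kronecker_sum (2 ^ (t + 1)) (parity_extend n c) (linear_form (t + 1) (\<lambda>i. c (n - 1 + i)))"

definition generator :: "nat \<Rightarrow> nat \<Rightarrow> bit list list" where
  "generator n t =
    map (\<lambda>k. map (codeword n t (\<lambda>i. of_bool (i = k))) [0..<2 ^ (t + 1) * n]) [0..<n + t]"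

definition code :: "nat \<Rightarrow> nat \<Rightarrow> bit list set" where
  "code n t = {lincomb (2 ^ (t + 1) * n) c (generator n t) | c. True}"

lemma codeword_add: "codeword n t (\<lambda>k. c k + d k) p = codeword n t c p + codeword n t d p"
  by (simp add: codeword_def kronecker_sum_def parity_extend_add linear_form_add add_ac)

lemma codeword_zero [simp]: "codeword n t (\<lambda>_. 0) p = 0"
  by (simp add: codeword_def kronecker_sum_def parity_extend_def linear_form_def)

lemma codeword_cong:
  assumes "n \<ge> 1" "\<And>k. k < n + t \<Longrightarrow> c k = d k"
  shows "codeword n t c = codeword n t d"
proof -
  have "parity_extend n c = parity_extend n d"
    unfolding parity_extend_def using assms(2) by (intro ext if_cong sum.cong refl) auto
  moreover have "linear_form (t + 1) (\<lambda>i. c (n - 1 + i)) = linear_form (t + 1) (\<lambda>i. d (n - 1 + i))"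
    unfolding linear_form_def using assms by (intro ext sum.cong refl arg_cong2[where f = "(*)"]) auto
  ultimately show ?thesis
    by (simp add: codeword_def)
qed

lemma codeword_eq_sum_unit:
  assumes "n \<ge> 1"
  shows "codeword n t c p = (\<Sum>k<n + t. c k * codeword n t (\<lambda>i. of_bool (i = k)) p)"
proof -
  have restrict: "(\<Sum>k\<in>K. c k * codeword n t (\<lambda>i. of_bool (i = k)) p) =
      codeword n t (\<lambda>i. if i \<in> K then c i else 0) p" if "finite K" for K
    using that
  proof (induction K rule: finite_induct)
    case empty
    then show ?case
      by simp
  next
    case (insert k K)
    have "(\<lambda>i. if i \<in> insert k K then c i else 0) =
        (\<lambda>i. (if i \<in> K then c i else 0) + c k * of_bool (i = k))"
      using insert.hyps(2) by (auto simp: fun_eq_iff)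
    then have "codeword n t (\<lambda>i. if i \<in> insert k K then c i else 0) p =
        codeword n t (\<lambda>i. if i \<in> K then c i else 0) p + codeword n t (\<lambda>i. c k * of_bool (i = k)) p"
      by (simp only: codeword_add)
    also have "codeword n t (\<lambda>i. c k * of_bool (i = k)) p = c k * codeword n t (\<lambda>i. of_bool (i = k)) p"
      by (cases "c k") simp_all
    finally show ?case
      using insert by (simp add: add.commute)
  qed
  have "codeword n t (\<lambda>i. if i \<in> {..<n + t} then c i else 0) = codeword n t c"
    by (rule codeword_cong[OF assms]) simp
  with restrict[of "{..<n + t}"] show ?thesis
    by simp
qed

lemma lincomb_generator:
  assumes "n \<ge> 1"
  shows "lincomb (2 ^ (t + 1) * n) c (generator n t) = map (codeword n t c) [0..<2 ^ (t + 1) * n]"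
proof -
  let ?N = "2 ^ (t + 1) * n"
  have "set (generator n t) \<subseteq> words ?N"
    by (auto simp: generator_def words_def)
  then have "lincomb ?N c (generator n t) =
      map (\<lambda>p. \<Sum>k<length (generator n t). c k * generator n t ! k ! p) [0..<?N]"
    by (rule lincomb_eq_map_sum)
  also have "\<dots> = map (\<lambda>p. \<Sum>k<n + t. c k * codeword n t (\<lambda>i. of_bool (i = k)) p) [0..<?N]"
    by (intro map_cong refl sum.cong) (auto simp: generator_def)
  also have "\<dots> = map (codeword n t c) [0..<?N]"
    by (simp only: codeword_eq_sum_unit[OF assms, symmetric])
  finally show ?thesis .
qed

lemma lin_indep_generator:
  assumes "n \<ge> 2"
  shows "lin_indep (2 ^ (t + 1) * n) (generator n t)"
  unfolding lin_indep_def
proof (rule allI, rule impI)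
  fix c
  let ?m = "2 ^ (t + 1) :: nat"
  assume "lincomb (?m * n) c (generator n t) = zero_word (?m * n)"
  then have zero: "codeword n t c p = 0" if "p < ?m * n" for p
    using that assms lincomb_generator[of n t c]
    by (auto simp: zero_word_def dest!: arg_cong[where f = "\<lambda>w. w ! p"])
  have low: "c k = 0" if "k < n - 1" for k
  proof -
    have "k * ?m < ?m * n"
      using that by (simp add: mult.commute)
    moreover have "codeword n t c (k * ?m) = c k"
      using that by (simp add: codeword_def kronecker_sum_def parity_extend_def)
    ultimately show ?thesis
      using zero by metis
  qed
  have high: "c (n - 1 + i) = 0" if "i < t + 1" for i
  proof -
    have "(2::nat) ^ i < ?m"
      using that by (intro power_strict_increasing) auto
    moreover have "?m \<le> ?m * n"
      using assms by simp
    ultimately have "codeword n t c (2 ^ i) = 0"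
      by (intro zero) linarith
    moreover have "codeword n t c (2 ^ i) = c 0 + c (n - 1 + i)"
      using \<open>2 ^ i < ?m\<close> that assms
      by (simp add: codeword_def kronecker_sum_def parity_extend_def linear_form_exp)
    ultimately show ?thesis
      using low[of 0] assms by simp
  qed
  show "\<forall>k<length (generator n t). c k = 0"
  proof (intro allI impI)
    fix k assume "k < length (generator n t)"
    then have "k < n - 1 \<or> (k = n - 1 + (k - (n - 1)) \<and> k - (n - 1) < t + 1)"
      by (auto simp: generator_def)
    then show "c k = 0"
      using low high by metis
  qed
qed

lemma card_support_codeword:
  "card {p. p < 2 ^ (t + 1) * n \<and> codeword n t c p \<noteq> 0} =
    (\<Sum>j<n. card {x. x < 2 ^ (t + 1) \<and>
      parity_extend n c j + linear_form (t + 1) (\<lambda>i. c (n - 1 + i)) x \<noteq> 0})"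
  unfolding codeword_def mult.commute[of "2 ^ (t + 1)" n] by (rule card_support_kronecker_sum)

lemma card_support_codeword_if_linear_part_nonzero:
  assumes "i < t + 1" "c (n - 1 + i) = 1"
  shows "2 * card {p. p < 2 ^ (t + 1) * n \<and> codeword n t c p \<noteq> 0} = 2 ^ (t + 1) * n"
proof -
  have "2 * card {p. p < 2 ^ (t + 1) * n \<and> codeword n t c p \<noteq> 0} =
      (\<Sum>j<n. 2 * card {x. x < 2 ^ (t + 1) \<and>
        parity_extend n c j + linear_form (t + 1) (\<lambda>i. c (n - 1 + i)) x \<noteq> 0})"
    by (simp only: card_support_codeword sum_distrib_left)
  also have "\<dots> = (\<Sum>j<n. 2 ^ (t + 1))"
    by (intro sum.cong refl card_support_add_linear_form[of i "t + 1" "\<lambda>i. c (n - 1 + i)", OF assms])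
  finally show ?thesis
    by simp
qed

lemma card_support_codeword_if_linear_part_zero:
  assumes "\<And>i. i < t + 1 \<Longrightarrow> c (n - 1 + i) = 0"
  shows "card {p. p < 2 ^ (t + 1) * n \<and> codeword n t c p \<noteq> 0} =
    2 ^ (t + 1) * card {j. j < n \<and> parity_extend n c j \<noteq> 0}"
proof -
  have "linear_form (t + 1) (\<lambda>i. c (n - 1 + i)) x = 0" for x
    by (rule linear_form_eq_0) (rule assms)
  moreover have "card {x :: nat. x < 2 ^ (t + 1) \<and> b \<noteq> 0} = 2 ^ (t + 1) * of_bool (b \<noteq> 0)" for b :: bit
    by simp
  ultimately have "card {p. p < 2 ^ (t + 1) * n \<and> codeword n t c p \<noteq> 0} =
      (\<Sum>j<n. 2 ^ (t + 1) * of_bool (parity_extend n c j \<noteq> 0))"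
    by (simp only: card_support_codeword add_0_right)
  also have "\<dots> = 2 ^ (t + 1) * card {j. j < n \<and> parity_extend n c j \<noteq> 0}"
    by (simp add: sum_distrib_left[symmetric] Int_def)
  finally show ?thesis .
qed

lemma card_support_codeword_ge:
  assumes "n \<ge> 4" "p < 2 ^ (t + 1) * n" "codeword n t c p \<noteq> 0"
  shows "2 ^ (t + 2) \<le> card {p. p < 2 ^ (t + 1) * n \<and> codeword n t c p \<noteq> 0}"
proof (cases "\<exists>i<t + 1. c (n - 1 + i) \<noteq> 0")
  case True
  then obtain i where "i < t + 1" "c (n - 1 + i) = 1"
    by auto
  then have "2 * card {p. p < 2 ^ (t + 1) * n \<and> codeword n t c p \<noteq> 0} = 2 ^ (t + 1) * n"
    by (rule card_support_codeword_if_linear_part_nonzero)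
  moreover have "2 ^ (t + 1) * 4 \<le> 2 ^ (t + 1) * n"
    using assms(1) by simp
  ultimately show ?thesis
    by simp
next
  case False
  let ?m = "2 ^ (t + 1) :: nat"
  have "p div ?m < n"
    using assms(2) by (simp add: less_mult_imp_div_less mult.commute)
  moreover have "parity_extend n c (p div ?m) \<noteq> 0"
    using assms(3) False by (simp add: codeword_def kronecker_sum_def linear_form_eq_0)
  ultimately have "2 \<le> card {j. j < n \<and> parity_extend n c j \<noteq> 0}"
    by (rule card_support_parity_extend_ge)
  then show ?thesis
    using card_support_codeword_if_linear_part_zero[of t c n] False by simp
qed

lemma sum_codeword_mult_eq_0:
  assumes "even n"
  shows "(\<Sum>p<2 ^ (t + 1) * n. codeword n t c p * codeword n t d p) = 0"
proof -
  let ?m = "2 ^ (t + 1) :: nat"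
  have "(\<Sum>p<?m * n. codeword n t c p * codeword n t d p) =
      of_nat ?m * (\<Sum>j<n. parity_extend n c j * parity_extend n d j)
      + (\<Sum>j<n. parity_extend n c j) * (\<Sum>x<?m. linear_form (t + 1) (\<lambda>i. d (n - 1 + i)) x)
      + (\<Sum>j<n. parity_extend n d j) * (\<Sum>x<?m. linear_form (t + 1) (\<lambda>i. c (n - 1 + i)) x)
      + of_nat n * (\<Sum>x<?m. linear_form (t + 1) (\<lambda>i. c (n - 1 + i)) x
          * linear_form (t + 1) (\<lambda>i. d (n - 1 + i)) x)"
    unfolding codeword_def mult.commute[of ?m n] by (rule sum_kronecker_sum_mult)
  moreover have "(of_nat ?m :: bit) = 0" "(of_nat n :: bit) = 0"
    using assms by (simp_all add: of_nat_bit_eq_0_iff)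
  ultimately show ?thesis
    by (simp add: sum_parity_extend)
qed

lemma code_eq:
  assumes "n \<ge> 1"
  shows "code n t = {map (codeword n t c) [0..<2 ^ (t + 1) * n] | c. True}"
  unfolding code_def lincomb_generator[OF assms] ..

lemma binary_linear_code_code:
  assumes "n \<ge> 2"
  shows "binary_linear_code (2 ^ (t + 1) * n) (n + t) (code n t)"
proof -
  have "length (generator n t) = n + t" "set (generator n t) \<subseteq> words (2 ^ (t + 1) * n)"
    by (auto simp: generator_def words_def)
  with lin_indep_generator[OF assms] show ?thesis
    unfolding binary_linear_code_def code_def by blast
qed

lemma euclid_self_orthogonal_code:
  assumes "even n" "n \<ge> 1"
  shows "euclid_self_orthogonal (2 ^ (t + 1) * n) (code n t)"
  using sum_codeword_mult_eq_0[OF assms(1)]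
  by (auto simp: euclid_self_orthogonal_def euclid_dual_def code_eq[OF assms(2)] words_def
      euclid_inner_def)

lemma min_distance_code:
  assumes "n \<ge> 4"
  shows "min_distance (code n t) = 2 ^ (t + 2)"
proof -
  let ?N = "2 ^ (t + 1) * n" and ?e0 = "\<lambda>i. of_bool (i = 0) :: bit"
  have C: "code n t = {map (codeword n t c) [0..<?N] | c. True}"
    using assms by (simp add: code_eq)
  have dist: "hamming_dist (map (codeword n t c) [0..<?N]) (map (codeword n t d) [0..<?N]) =
      card {p. p < ?N \<and> codeword n t (\<lambda>k. c k + d k) p \<noteq> 0}" for c d
    by (simp add: hamming_dist_map codeword_add)
  have lower: "2 ^ (t + 2) \<le> hamming_dist x y"
    if x: "x \<in> code n t" and y: "y \<in> code n t" and "x \<noteq> y" for x y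
  proof -
    obtain c d where xy: "x = map (codeword n t c) [0..<?N]" "y = map (codeword n t d) [0..<?N]"
      using x y C by auto
    then obtain p where "p < ?N" "codeword n t (\<lambda>k. c k + d k) p \<noteq> 0"
      using \<open>x \<noteq> y\<close> by (auto simp: codeword_add bit_add_eq_0_iff)
    then show ?thesis
      unfolding xy dist using card_support_codeword_ge[OF assms] by blast
  qed
  have "{j. j < n \<and> parity_extend n ?e0 j \<noteq> 0} = {0, n - 1}"
    using assms by (auto simp: parity_extend_def)
  then have "card {p. p < ?N \<and> codeword n t ?e0 p \<noteq> 0} = 2 ^ (t + 2)"
    using assms card_support_codeword_if_linear_part_zero[of t ?e0 n] by simp
  then have weight: "hamming_dist (map (codeword n t ?e0) [0..<?N]) (map (codeword n t (\<lambda>_. 0)) [0..<?N]) =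
      2 ^ (t + 2)"
    using dist[of ?e0 "\<lambda>_. 0"] by simp
  show ?thesis
  proof (rule min_distance_eqI[OF _ lower _ _ _ weight])
    show "code n t \<subseteq> words ?N"
      by (auto simp: C words_def)
    show "map (codeword n t ?e0) [0..<?N] \<noteq> map (codeword n t (\<lambda>_. 0)) [0..<?N]"
    proof
      assume "map (codeword n t ?e0) [0..<?N] = map (codeword n t (\<lambda>_. 0)) [0..<?N]"
      then have "hamming_dist (map (codeword n t ?e0) [0..<?N]) (map (codeword n t (\<lambda>_. 0)) [0..<?N]) = 0"
        by (simp only: hamming_dist_def) simp
      with weight show False
        by simp
    qed
  qed (unfold C; blast)+
qed

theorem theorem12:
  fixes t n :: nat
  assumes "even n" and "n \<ge> 4"
  shows "\<exists>C. binary_linear_code (2 ^ (t + 1) * n) (n + t) C \<and>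
             min_distance C = 2 ^ (t + 2) \<and>
             even_like C \<and>
             euclid_self_orthogonal (2 ^ (t + 1) * n) C"
proof (intro exI conjI)
  show "binary_linear_code (2 ^ (t + 1) * n) (n + t) (code n t)"
    using assms(2) by (intro binary_linear_code_code) simp
  show "min_distance (code n t) = 2 ^ (t + 2)"
    using assms(2) by (rule min_distance_code)
  show self_orthogonal: "euclid_self_orthogonal (2 ^ (t + 1) * n) (code n t)"
    using assms by (intro euclid_self_orthogonal_code) simp_all
  show "even_like (code n t)"
    using self_orthogonal by (rule self_orthogonal_imp_even_like)
qed

end
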